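(* Let $R$ be an integral domain (not a field) that is finitely stable and an LPI-domain, and assume every nonzero prime ideal of $R$ is contained in a unique maximal ideal (for instance, $R$ is one-dimensional). Then $R$ has finite character.
   Context: Let $R$ be an integral domain with quotient field $K\neq R$. For a nonzero ideal $I$ of $R$, $E(I):=(I:I)=\{x\in K: xI\subseteq I\}$. An ideal $I$ is locally principal if $IR_M$ is principal for every maximal ideal $M$ of $R$; it is invertible if $I(R:I)=R$, where $(R:I)=\{x\in K: xI\subseteq R\}$. $R$ is an LPI-domain if every locally principal nonzero ideal of $R$ is invertible. A nonzero ideal $I$ is stable if it is invertible as an ideal of the ring $E(I)$; $R$ is finitely stable if every nonzero finitely generated ideal of $R$ is stable. $R$ has finite character if every nonzero element of $R$ lies in only finitely many maximal ideals of $R$. *)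

theory Defs
  imports Main
begin

text \<open>Setting: R is a subring of a field K (of type 'k) and K is the quotient field of R.
  Ideals of R are subsets of R; fractional constructions live in K.\<close>

definition subring :: "'k::field set \<Rightarrow> bool" where
  "subring R \<longleftrightarrow> 0 \<in> R \<and> 1 \<in> R \<and> (\<forall>a\<in>R. \<forall>b\<in>R. a + b \<in> R \<and> a * b \<in> R \<and> - a \<in> R)"

definition quotient_field_is_UNIV :: "'k::field set \<Rightarrow> bool" where
  "quotient_field_is_UNIV R \<longleftrightarrow> (\<forall>x::'k. \<exists>a\<in>R. \<exists>b\<in>R. b \<noteq> 0 \<and> x = a / b)"

definition set_prod :: "'k::field set \<Rightarrow> 'k set \<Rightarrow> 'k set" where
  "set_prod A B = {x. \<exists>n::nat. \<exists>a b. (\<forall>i<n. a i \<in> A \<and> b i \<in> B) \<and> x = (\<Sum>i<n. a i * b i)}"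

definition ideal_of :: "'k::field set \<Rightarrow> 'k set \<Rightarrow> bool" where
  "ideal_of R I \<longleftrightarrow> I \<subseteq> R \<and> 0 \<in> I \<and> (\<forall>a\<in>I. \<forall>b\<in>I. a + b \<in> I) \<and> (\<forall>r\<in>R. \<forall>a\<in>I. r * a \<in> I)"

definition nonzero_ideal :: "'k::field set \<Rightarrow> 'k set \<Rightarrow> bool" where
  "nonzero_ideal R I \<longleftrightarrow> ideal_of R I \<and> I \<noteq> {0}"

definition prime_ideal_of :: "'k::field set \<Rightarrow> 'k set \<Rightarrow> bool" where
  "prime_ideal_of R P \<longleftrightarrow> ideal_of R P \<and> P \<noteq> R \<and> (\<forall>a\<in>R. \<forall>b\<in>R. a * b \<in> P \<longrightarrow> a \<in> P \<or> b \<in> P)"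

definition maximal_ideal_of :: "'k::field set \<Rightarrow> 'k set \<Rightarrow> bool" where
  "maximal_ideal_of R M \<longleftrightarrow> ideal_of R M \<and> M \<noteq> R \<and>
     (\<forall>J. ideal_of R J \<and> M \<subseteq> J \<longrightarrow> J = M \<or> J = R)"

definition fin_gen_ideal :: "'k::field set \<Rightarrow> 'k set \<Rightarrow> bool" where
  "fin_gen_ideal R I \<longleftrightarrow> (\<exists>F. finite F \<and> F \<subseteq> R \<and> I = set_prod R F)"

definition colon :: "'k::field set \<Rightarrow> 'k set \<Rightarrow> 'k set" where
  "colon A B = {x. \<forall>b\<in>B. x * b \<in> A}"

definition endo :: "'k::field set \<Rightarrow> 'k set" where
  "endo I = colon I I"

definition invertible_in :: "'k::field set \<Rightarrow> 'k set \<Rightarrow> bool" where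
  "invertible_in S I \<longleftrightarrow> set_prod I (colon S I) = S"

definition localization :: "'k::field set \<Rightarrow> 'k set \<Rightarrow> 'k set" where
  "localization R M = {a / s | a s. a \<in> R \<and> s \<in> R - M}"

definition ext_ideal :: "'k::field set \<Rightarrow> 'k set \<Rightarrow> 'k set \<Rightarrow> 'k set" where
  "ext_ideal R M I = set_prod I (localization R M)"

definition locally_principal :: "'k::field set \<Rightarrow> 'k set \<Rightarrow> bool" where
  "locally_principal R I \<longleftrightarrow> (\<forall>M. maximal_ideal_of R M \<longrightarrow>
     (\<exists>a. ext_ideal R M I = (\<lambda>y. a * y) ` localization R M))"

definition LPI_domain :: "'k::field set \<Rightarrow> bool" where
  "LPI_domain R \<longleftrightarrow> (\<forall>I. nonzero_ideal R I \<and> locally_principal R I \<longrightarrow> invertible_in R I)"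

definition stable_ideal :: "'k::field set \<Rightarrow> bool" where
  "stable_ideal I \<longleftrightarrow> invertible_in (endo I) I"

definition finitely_stable :: "'k::field set \<Rightarrow> bool" where
  "finitely_stable R \<longleftrightarrow> (\<forall>I. nonzero_ideal R I \<and> fin_gen_ideal R I \<longrightarrow> stable_ideal I)"

definition finite_character :: "'k::field set \<Rightarrow> bool" where
  "finite_character R \<longleftrightarrow> (\<forall>x\<in>R. x \<noteq> 0 \<longrightarrow> finite {M. maximal_ideal_of R M \<and> x \<in> M})"

end

theory Submission
  imports Defs
begin

text \<open>
  Fix a nonzero x and a maximal ideal M containing it. The contraction A = x R_M \<inter> R is
  locally principal: it is generated by x at M, and at any other maximal ideal N it is the
  unit ideal, because a prime ideal lying in M \<inter> N and containing x would contradict the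
  uniqueness hypothesis. Hence A is invertible, and 1 \<in> A (R : A) yields y \<in> (R : A) with
  xy \<notin> M, while xy lies in every other maximal ideal containing x. Such separating
  elements force finite character: the elements of R lying outside only finitely many
  maximal ideals containing x form an ideal containing x; if it were proper, a maximal
  ideal M above it would contain x and hence the element separating M, which is absurd.
\<close>

lemma ideal_subset: "ideal_of R I \<Longrightarrow> a \<in> I \<Longrightarrow> a \<in> R"
  by (auto simp: ideal_of_def)

lemma ideal_zero: "ideal_of R I \<Longrightarrow> 0 \<in> I"
  by (auto simp: ideal_of_def)

lemma ideal_add: "ideal_of R I \<Longrightarrow> a \<in> I \<Longrightarrow> b \<in> I \<Longrightarrow> a + b \<in> I"
  by (auto simp: ideal_of_def)

lemma ideal_mult_left: "ideal_of R I \<Longrightarrow> r \<in> R \<Longrightarrow> a \<in> I \<Longrightarrow> r * a \<in> I"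
  by (auto simp: ideal_of_def)

lemma ideal_mult_right: "ideal_of R I \<Longrightarrow> r \<in> R \<Longrightarrow> a \<in> I \<Longrightarrow> a * r \<in> I"
  by (metis ideal_mult_left mult.commute)

lemma prime_ideal_ideal: "prime_ideal_of R P \<Longrightarrow> ideal_of R P"
  by (simp add: prime_ideal_of_def)

lemma prime_ideal_mult_notin:
  "prime_ideal_of R P \<Longrightarrow> a \<in> R \<Longrightarrow> b \<in> R \<Longrightarrow> a \<notin> P \<Longrightarrow> b \<notin> P \<Longrightarrow> a * b \<notin> P"
  unfolding prime_ideal_of_def by blast

lemma maximal_ideal_ideal: "maximal_ideal_of R M \<Longrightarrow> ideal_of R M"
  by (simp add: maximal_ideal_of_def)

lemma set_prod_mem: "a \<in> A \<Longrightarrow> b \<in> B \<Longrightarrow> a * b \<in> set_prod A B"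
  unfolding set_prod_def by (intro CollectI exI[of _ 1]) auto

lemma set_prod_subset:
  assumes "\<And>a b. a \<in> A \<Longrightarrow> b \<in> B \<Longrightarrow> a * b \<in> C" and "0 \<in> C"
    and "\<And>u v. u \<in> C \<Longrightarrow> v \<in> C \<Longrightarrow> u + v \<in> C"
  shows "set_prod A B \<subseteq> C"
proof
  fix z assume "z \<in> set_prod A B"
  then obtain n :: nat and a b where "\<forall>i<n. a i \<in> A \<and> b i \<in> B" "z = (\<Sum>i<n. a i * b i)"
    unfolding set_prod_def by blast
  moreover have "(\<Sum>i<m. a i * b i) \<in> C" if "\<forall>i<m. a i \<in> A \<and> b i \<in> B" for m
    using that by (induction m) (simp_all add: assms(1-3))
  ultimately show "z \<in> C"
    by simp
qed

definition ideal_adjoin :: "'k::field set \<Rightarrow> 'k set \<Rightarrow> 'k \<Rightarrow> 'k set" where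
  "ideal_adjoin R P a = {p + r * a | p r. p \<in> P \<and> r \<in> R}"

lemma ideal_adjoinE:
  assumes "x \<in> ideal_adjoin R P a"
  obtains p r where "x = p + r * a" "p \<in> P" "r \<in> R"
  using assms unfolding ideal_adjoin_def by blast

locale subdomain =
  fixes R :: "'k::field set"
  assumes R: "subring R"
begin

lemma subring_zero: "0 \<in> R"
  using R by (simp add: subring_def)

lemma subring_one: "1 \<in> R"
  using R by (simp add: subring_def)

lemma subring_add: "a \<in> R \<Longrightarrow> b \<in> R \<Longrightarrow> a + b \<in> R"
  using R by (simp add: subring_def)

lemma subring_mult: "a \<in> R \<Longrightarrow> b \<in> R \<Longrightarrow> a * b \<in> R"
  using R by (simp add: subring_def)

lemma ideal_eq_if_one_mem:
  assumes I: "ideal_of R I" and "1 \<in> I"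
  shows "I = R"
proof
  show "I \<subseteq> R"
    using I ideal_subset by blast
  show "R \<subseteq> I"
  proof
    fix r assume "r \<in> R"
    then have "r * 1 \<in> I"
      using ideal_mult_left[OF I _ \<open>1 \<in> I\<close>] by simp
    then show "r \<in> I" by simp
  qed
qed

lemma one_notin_prime_ideal: "prime_ideal_of R P \<Longrightarrow> 1 \<notin> P"
  using ideal_eq_if_one_mem unfolding prime_ideal_of_def by blast

lemma one_notin_maximal_ideal: "maximal_ideal_of R M \<Longrightarrow> 1 \<notin> M"
  using ideal_eq_if_one_mem unfolding maximal_ideal_of_def by blast

lemma ideal_adjoin:
  assumes P: "ideal_of R P" and a: "a \<in> R"
  shows "ideal_of R (ideal_adjoin R P a)" and "P \<subseteq> ideal_adjoin R P a"
    and "a \<in> ideal_adjoin R P a"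
proof -
  have mem: "p + r * a \<in> ideal_adjoin R P a" if "p \<in> P" "r \<in> R" for p r
    using that unfolding ideal_adjoin_def by blast
  show "ideal_of R (ideal_adjoin R P a)"
    unfolding ideal_of_def
  proof (intro conjI ballI subsetI)
    fix x assume "x \<in> ideal_adjoin R P a"
    then obtain p r where "x = p + r * a" "p \<in> P" "r \<in> R"
      by (rule ideal_adjoinE)
    then show "x \<in> R"
      using P a by (simp add: ideal_subset subring_add subring_mult)
  next
    show "0 \<in> ideal_adjoin R P a"
      using mem[OF ideal_zero[OF P] subring_zero] by simp
  next
    fix x y assume "x \<in> ideal_adjoin R P a" "y \<in> ideal_adjoin R P a"
    then obtain p1 r1 p2 r2 where "x = p1 + r1 * a" "y = p2 + r2 * a"
      and p: "p1 \<in> P" "p2 \<in> P" and r: "r1 \<in> R" "r2 \<in> R"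
      by (elim ideal_adjoinE)
    then have "x + y = (p1 + p2) + (r1 + r2) * a"
      by (simp add: algebra_simps)
    also have "\<dots> \<in> ideal_adjoin R P a"
      by (rule mem[OF ideal_add[OF P p] subring_add[OF r]])
    finally show "x + y \<in> ideal_adjoin R P a" .
  next
    fix s x assume s: "s \<in> R" and "x \<in> ideal_adjoin R P a"
    then obtain p r where "x = p + r * a" and p: "p \<in> P" and r: "r \<in> R"
      by (elim ideal_adjoinE)
    then have "s * x = s * p + (s * r) * a"
      by (simp add: algebra_simps)
    also have "\<dots> \<in> ideal_adjoin R P a"
      by (rule mem[OF ideal_mult_left[OF P s p] subring_mult[OF s r]])
    finally show "s * x \<in> ideal_adjoin R P a" .
  qed
  show "P \<subseteq> ideal_adjoin R P a"
    using mem[OF _ subring_zero] by auto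
  show "a \<in> ideal_adjoin R P a"
    using mem[OF ideal_zero[OF P] subring_one] by simp
qed

lemma prime_ideal_if_maximal_avoiding:
  assumes P: "ideal_of R P" and avoid: "P \<inter> S = {}"
    and S_one: "1 \<in> S" and S_mult: "\<And>a b. a \<in> S \<Longrightarrow> b \<in> S \<Longrightarrow> a * b \<in> S"
    and max: "\<And>Q. ideal_of R Q \<Longrightarrow> P \<subseteq> Q \<Longrightarrow> Q \<inter> S = {} \<Longrightarrow> Q = P"
  shows "prime_ideal_of R P"
  unfolding prime_ideal_of_def
proof (intro conjI ballI impI)
  show "ideal_of R P" by fact
  show "P \<noteq> R"
    using avoid S_one subring_one by blast
  have meets_S: "\<exists>s\<in>S. \<exists>p\<in>P. \<exists>r\<in>R. s = p + r * c" if c: "c \<in> R" "c \<notin> P" for c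
  proof (rule ccontr)
    assume "\<not> ?thesis"
    then have "ideal_adjoin R P c \<inter> S = {}"
      unfolding ideal_adjoin_def by blast
    then have "ideal_adjoin R P c = P"
      using ideal_adjoin(1,2)[OF P c(1)] by (rule max[rotated 2])
    then show False
      using ideal_adjoin(3)[OF P c(1)] c(2) by simp
  qed
  fix a b assume a: "a \<in> R" and b: "b \<in> R" and ab: "a * b \<in> P"
  show "a \<in> P \<or> b \<in> P"
  proof (rule ccontr)
    assume "\<not> (a \<in> P \<or> b \<in> P)"
    then obtain s1 p1 r1 s2 p2 r2 where s: "s1 \<in> S" "s2 \<in> S"
      and p: "p1 \<in> P" "p2 \<in> P" and r: "r1 \<in> R" "r2 \<in> R"
      and s1: "s1 = p1 + r1 * a" and s2: "s2 = p2 + r2 * b"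
      using meets_S[OF a] meets_S[OF b] by blast
    have s2R: "s2 \<in> R"
      unfolding s2 using ideal_subset[OF P p(2)] r(2) b by (simp add: subring_add subring_mult)
    have "s1 * s2 = p1 * s2 + r1 * (a * p2) + (r1 * r2) * (a * b)"
      unfolding s1 s2 by (simp add: algebra_simps)
    also have "\<dots> \<in> P"
      using ideal_mult_right[OF P s2R p(1)]
        ideal_mult_left[OF P r(1) ideal_mult_left[OF P a p(2)]]
        ideal_mult_left[OF P subring_mult[OF r] ab]
      by (intro ideal_add[OF P])
    finally show False
      using S_mult[OF s] avoid by blast
  qed
qed

lemma maximal_ideal_imp_prime: "maximal_ideal_of R M \<Longrightarrow> prime_ideal_of R M"
  by (rule prime_ideal_if_maximal_avoiding[where S = "{1}"])
     (use subring_one one_notin_maximal_ideal in \<open>auto simp: maximal_ideal_of_def\<close>)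

lemma ideal_Union_chain:
  assumes "C \<noteq> {}" and ideals: "\<And>I. I \<in> C \<Longrightarrow> ideal_of R I"
    and chain: "\<And>I J. I \<in> C \<Longrightarrow> J \<in> C \<Longrightarrow> I \<subseteq> J \<or> J \<subseteq> I"
  shows "ideal_of R (\<Union>C)"
  unfolding ideal_of_def
proof (intro conjI ballI)
  show "\<Union>C \<subseteq> R"
    using ideals ideal_subset by blast
  obtain I where "I \<in> C"
    using \<open>C \<noteq> {}\<close> by blast
  then show "0 \<in> \<Union>C"
    using ideals ideal_zero by blast
next
  fix a b assume "a \<in> \<Union>C" "b \<in> \<Union>C"
  then obtain I J where "a \<in> I" "b \<in> J" "I \<in> C" "J \<in> C" by blast
  moreover from this have "a \<in> J \<and> b \<in> J \<or> a \<in> I \<and> b \<in> I"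
    using chain[of I J] by blast
  ultimately show "a + b \<in> \<Union>C"
    using ideals ideal_add by blast
next
  fix r a assume "r \<in> R" "a \<in> \<Union>C"
  then show "r * a \<in> \<Union>C"
    using ideals ideal_mult_left by blast
qed

lemma ideal_maximal_avoiding_exists:
  assumes "ideal_of R A" and "A \<inter> S = {}"
  obtains P where "ideal_of R P" "A \<subseteq> P" "P \<inter> S = {}"
    and "\<And>Q. ideal_of R Q \<Longrightarrow> P \<subseteq> Q \<Longrightarrow> Q \<inter> S = {} \<Longrightarrow> Q = P"
proof -
  let ?C = "{Q. ideal_of R Q \<and> A \<subseteq> Q \<and> Q \<inter> S = {}}"
  have "\<exists>P\<in>?C. \<forall>Q\<in>?C. P \<subseteq> Q \<longrightarrow> Q = P"
  proof (rule subset_Zorn_nonempty)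
    show "?C \<noteq> {}"
      using assms by blast
  next
    fix C assume "C \<noteq> {}" and "subset.chain ?C C"
    then have C: "C \<subseteq> ?C" and chain: "\<And>I J. I \<in> C \<Longrightarrow> J \<in> C \<Longrightarrow> I \<subseteq> J \<or> J \<subseteq> I"
      unfolding subset_chain_def by blast+
    have "ideal_of R (\<Union>C)"
      by (rule ideal_Union_chain[OF \<open>C \<noteq> {}\<close> _ chain]) (use C in blast)
    moreover have "A \<subseteq> \<Union>C" "\<Union>C \<inter> S = {}"
      using \<open>C \<noteq> {}\<close> C by blast+
    ultimately show "\<Union>C \<in> ?C"
      by blast
  qed
  then obtain P where "ideal_of R P" "A \<subseteq> P" "P \<inter> S = {}"
    and "\<forall>Q\<in>?C. P \<subseteq> Q \<longrightarrow> Q = P"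
    by blast
  then show thesis
    by (intro that[of P]) blast+
qed

lemma prime_ideal_avoiding_exists:
  assumes "ideal_of R A" and "A \<inter> S = {}"
    and "1 \<in> S" and "\<And>a b. a \<in> S \<Longrightarrow> b \<in> S \<Longrightarrow> a * b \<in> S"
  obtains P where "prime_ideal_of R P" "A \<subseteq> P" "P \<inter> S = {}"
proof -
  obtain P where P: "ideal_of R P" "A \<subseteq> P" "P \<inter> S = {}"
    and max: "\<And>Q. ideal_of R Q \<Longrightarrow> P \<subseteq> Q \<Longrightarrow> Q \<inter> S = {} \<Longrightarrow> Q = P"
    using ideal_maximal_avoiding_exists[OF assms(1,2)] by metis
  show thesis
    by (rule that[OF prime_ideal_if_maximal_avoiding[OF P(1,3) assms(3,4) max] P(2,3)])
qed

lemma maximal_ideal_containing_exists: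
  assumes A: "ideal_of R A" and "1 \<notin> A"
  obtains M where "maximal_ideal_of R M" "A \<subseteq> M"
proof -
  obtain P where P: "ideal_of R P" "A \<subseteq> P" "P \<inter> {1} = {}"
    and max: "\<And>Q. ideal_of R Q \<Longrightarrow> P \<subseteq> Q \<Longrightarrow> Q \<inter> {1} = {} \<Longrightarrow> Q = P"
    by (rule ideal_maximal_avoiding_exists[OF A, of "{1}"]) (use \<open>1 \<notin> A\<close> in simp_all)
  have "J = P \<or> J = R" if "ideal_of R J" "P \<subseteq> J" for J
  proof (cases "1 \<in> J")
    case True
    then show ?thesis using ideal_eq_if_one_mem[OF that(1)] by simp
  next
    case False
    then show ?thesis using max[OF that] by simp
  qed
  moreover have "P \<noteq> R"
    using P(3) subring_one by blast
  ultimately have "maximal_ideal_of R P"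
    unfolding maximal_ideal_of_def using P(1) by blast
  then show thesis
    using P(2) by (rule that)
qed

lemma localizationI: "a \<in> R \<Longrightarrow> s \<in> R \<Longrightarrow> s \<notin> M \<Longrightarrow> a / s \<in> localization R M"
  unfolding localization_def by blast

lemma localizationE:
  assumes "y \<in> localization R M"
  obtains a s where "y = a / s" "a \<in> R" "s \<in> R" "s \<notin> M"
  using assms unfolding localization_def by blast

lemma subring_subset_localization:
  assumes "prime_ideal_of R M" and "r \<in> R"
  shows "r \<in> localization R M"
  using localizationI[of r 1 M] assms one_notin_prime_ideal subring_one by simp

lemma localization_mult:
  assumes M: "prime_ideal_of R M"
    and "y \<in> localization R M" "z \<in> localization R M"
  shows "y * z \<in> localization R M"
proof -
  obtain a s b t where "y = a / s" "z = b / t" "a \<in> R" "b \<in> R" "s \<in> R" "t \<in> R"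
    "s \<notin> M" "t \<notin> M"
    using assms(2,3) by (metis localizationE)
  moreover have "(a * b) / (s * t) \<in> localization R M" if "a \<in> R" "b \<in> R" "s \<in> R" "t \<in> R"
    "s \<notin> M" "t \<notin> M"
    using that prime_ideal_mult_notin[OF M] by (intro localizationI subring_mult) auto
  ultimately show ?thesis
    by simp
qed

lemma localization_add:
  assumes M: "prime_ideal_of R M"
    and "y \<in> localization R M" "z \<in> localization R M"
  shows "y + z \<in> localization R M"
proof -
  obtain a s b t where y: "y = a / s" "a \<in> R" "s \<in> R" "s \<notin> M"
    and z: "z = b / t" "b \<in> R" "t \<in> R" "t \<notin> M"
    using assms(2,3) by (metis localizationE)
  have "s \<noteq> 0" "t \<noteq> 0"
    using y z ideal_zero[OF prime_ideal_ideal[OF M]] by auto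
  then have "y + z = (a * t + b * s) / (s * t)"
    using y z by (simp add: field_simps)
  also have "\<dots> \<in> localization R M"
    using y z prime_ideal_mult_notin[OF M] by (intro localizationI subring_mult subring_add) auto
  finally show ?thesis .
qed

end

subsection \<open>The contracted ideal x R_N \<inter> R\<close>

definition contracted_principal :: "'k::field set \<Rightarrow> 'k set \<Rightarrow> 'k \<Rightarrow> 'k set" where
  "contracted_principal R N x = {r \<in> R. \<exists>s\<in>R. s \<notin> N \<and> (\<exists>t\<in>R. r * s = x * t)}"

lemma contracted_principalI:
  "r \<in> R \<Longrightarrow> s \<in> R \<Longrightarrow> s \<notin> N \<Longrightarrow> t \<in> R \<Longrightarrow> r * s = x * t \<Longrightarrow> r \<in> contracted_principal R N x"
  unfolding contracted_principal_def by blast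

lemma contracted_principalE:
  assumes "r \<in> contracted_principal R N x"
  obtains s t where "r \<in> R" "s \<in> R" "s \<notin> N" "t \<in> R" "r * s = x * t"
  using assms unfolding contracted_principal_def by blast

context subdomain
begin

lemma ideal_contracted_principal:
  assumes N: "prime_ideal_of R N"
  shows "ideal_of R (contracted_principal R N x)"
  unfolding ideal_of_def
proof (intro conjI ballI subsetI)
  fix r assume "r \<in> contracted_principal R N x"
  then show "r \<in> R" by (rule contracted_principalE)
next
  show "0 \<in> contracted_principal R N x"
    using N one_notin_prime_ideal R subring_zero subring_one
    by (intro contracted_principalI[of _ _ 1 _ 0]) auto
next
  fix a b assume "a \<in> contracted_principal R N x" "b \<in> contracted_principal R N x"
  then obtain s1 t1 s2 t2 where a: "a \<in> R" "s1 \<in> R" "s1 \<notin> N" "t1 \<in> R" "a * s1 = x * t1"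
    and b: "b \<in> R" "s2 \<in> R" "s2 \<notin> N" "t2 \<in> R" "b * s2 = x * t2"
    by (metis contracted_principalE)
  have "(a + b) * (s1 * s2) = (a * s1) * s2 + (b * s2) * s1"
    by (simp add: algebra_simps)
  also have "\<dots> = x * (t1 * s2 + t2 * s1)"
    using a(5) b(5) by (simp add: algebra_simps)
  finally show "a + b \<in> contracted_principal R N x"
    using a b prime_ideal_mult_notin[OF N]
    by (intro contracted_principalI) (simp_all add: subring_add subring_mult)
next
  fix c a assume c: "c \<in> R" and "a \<in> contracted_principal R N x"
  then obtain s t where a: "a \<in> R" "s \<in> R" "s \<notin> N" "t \<in> R" "a * s = x * t"
    by (metis contracted_principalE)
  have "(c * a) * s = x * (c * t)"
    using a(5) by (simp add: ac_simps)
  then show "c * a \<in> contracted_principal R N x"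
    using a c by (intro contracted_principalI[where s = s and t = "c * t"]) (simp_all add: subring_mult)
qed

lemma self_mem_contracted_principal:
  "prime_ideal_of R N \<Longrightarrow> x \<in> R \<Longrightarrow> x \<in> contracted_principal R N x"
  using one_notin_prime_ideal subring_one by (intro contracted_principalI[of _ _ 1 _ 1]) auto

lemma contracted_principal_saturated:
  assumes N: "prime_ideal_of R N" and "a \<in> R" "b \<in> R" "b \<notin> N"
    and "a * b \<in> contracted_principal R N x"
  shows "a \<in> contracted_principal R N x"
proof -
  obtain s t where st: "s \<in> R" "s \<notin> N" "t \<in> R" "(a * b) * s = x * t"
    using assms(5) by (rule contracted_principalE)
  then have "a * (b * s) = x * t"
    by (simp add: mult.assoc)
  then show ?thesis
    using assms st prime_ideal_mult_notin[OF N]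
    by (intro contracted_principalI) (simp_all add: subring_mult)
qed

lemma prime_ideal_below_two_exists:
  assumes M: "prime_ideal_of R M" and N: "prime_ideal_of R N" and A: "ideal_of R A"
    and avoid: "\<And>a b. a \<in> R \<Longrightarrow> a \<notin> M \<Longrightarrow> b \<in> R \<Longrightarrow> b \<notin> N \<Longrightarrow> a * b \<notin> A"
  obtains P where "prime_ideal_of R P" "A \<subseteq> P" "P \<subseteq> M" "P \<subseteq> N"
proof -
  define S where "S = {a * b | a b. a \<in> R \<and> a \<notin> M \<and> b \<in> R \<and> b \<notin> N}"
  have "A \<inter> S = {}"
    unfolding S_def using avoid by blast
  moreover have "1 \<in> S"
    unfolding S_def using subring_one one_notin_prime_ideal[OF M] one_notin_prime_ideal[OF N]
    by force
  moreover have "a * b \<in> S" if ab: "a \<in> S" "b \<in> S" for a b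
  proof -
    obtain a1 a2 b1 b2 where "a = a1 * a2" "b = b1 * b2" "a1 \<in> R" "a1 \<notin> M" "a2 \<in> R" "a2 \<notin> N"
      "b1 \<in> R" "b1 \<notin> M" "b2 \<in> R" "b2 \<notin> N"
      using ab unfolding S_def by blast
    moreover from this have "a * b = (a1 * b1) * (a2 * b2)"
      by (simp add: ac_simps)
    ultimately show ?thesis
      unfolding S_def using prime_ideal_mult_notin[OF M] prime_ideal_mult_notin[OF N]
      by (blast intro: subring_mult)
  qed
  ultimately obtain P where P: "prime_ideal_of R P" "A \<subseteq> P" "P \<inter> S = {}"
    using prime_ideal_avoiding_exists[OF A] by metis
  have "p \<in> M \<and> p \<in> N" if "p \<in> P" for p
  proof -
    have "p \<in> R"
      using that ideal_subset[OF prime_ideal_ideal[OF P(1)]] by blast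
    then have "p \<notin> M \<longrightarrow> p * 1 \<in> S" "p \<notin> N \<longrightarrow> 1 * p \<in> S"
      unfolding S_def using subring_one one_notin_prime_ideal[OF M] one_notin_prime_ideal[OF N]
      by blast+
    then show ?thesis
      using P(3) that by auto
  qed
  then show thesis
    using that P(1,2) by blast
qed

lemma contracted_principal_not_subset:
  assumes unique: "\<forall>P. prime_ideal_of R P \<and> P \<noteq> {0} \<longrightarrow> (\<exists>!M. maximal_ideal_of R M \<and> P \<subseteq> M)"
    and N: "maximal_ideal_of R N" and M: "maximal_ideal_of R M" and "M \<noteq> N"
    and x: "x \<in> R" "x \<noteq> 0"
  shows "\<not> contracted_principal R N x \<subseteq> M"
proof
  assume sub: "contracted_principal R N x \<subseteq> M"
  have Np: "prime_ideal_of R N" and Mp: "prime_ideal_of R M"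
    using N M by (simp_all only: maximal_ideal_imp_prime)
  obtain P where P: "prime_ideal_of R P" "contracted_principal R N x \<subseteq> P" "P \<subseteq> M" "P \<subseteq> N"
    using prime_ideal_below_two_exists[OF Mp Np ideal_contracted_principal[OF Np]]
      contracted_principal_saturated[OF Np] sub by blast
  have "P \<noteq> {0}"
    using P(2) self_mem_contracted_principal[OF Np x(1)] x(2) by blast
  then have "M = N"
    using unique P M N by blast
  with \<open>M \<noteq> N\<close> show False ..
qed

lemma ext_ideal_contracted_principal_self:
  assumes N: "prime_ideal_of R N" and x: "x \<in> R"
  shows "ext_ideal R N (contracted_principal R N x) = (\<lambda>y. x * y) ` localization R N"
  unfolding ext_ideal_def
proof
  let ?L = "localization R N"
  show "set_prod (contracted_principal R N x) ?L \<subseteq> (\<lambda>y. x * y) ` ?L"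
  proof (rule set_prod_subset)
    fix a b assume a: "a \<in> contracted_principal R N x" and b: "b \<in> ?L"
    obtain s t where st: "s \<in> R" "s \<notin> N" "t \<in> R" "a * s = x * t"
      using a by (rule contracted_principalE)
    have "s \<noteq> 0"
      using st(2) ideal_zero[OF prime_ideal_ideal[OF N]] by auto
    then have "a * b = x * ((t / s) * b)"
      using st(4) by (simp add: field_simps)
    moreover have "(t / s) * b \<in> ?L"
      using st b by (intro localization_mult[OF N] localizationI)
    ultimately show "a * b \<in> (\<lambda>y. x * y) ` ?L"
      by blast
  next
    show "0 \<in> (\<lambda>y. x * y) ` ?L"
      using subring_subset_localization[OF N subring_zero] by force
  next
    fix u v assume "u \<in> (\<lambda>y. x * y) ` ?L" "v \<in> (\<lambda>y. x * y) ` ?L"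
    then obtain u' v' where "u = x * u'" "v = x * v'" "u' \<in> ?L" "v' \<in> ?L"
      by blast
    moreover from this have "u + v = x * (u' + v')" "u' + v' \<in> ?L"
      by (simp_all add: distrib_left localization_add[OF N])
    ultimately show "u + v \<in> (\<lambda>y. x * y) ` ?L"
      by blast
  qed
  show "(\<lambda>y. x * y) ` ?L \<subseteq> set_prod (contracted_principal R N x) ?L"
    using set_prod_mem self_mem_contracted_principal[OF N x] by blast
qed

lemma ext_ideal_eq_localization:
  assumes I: "ideal_of R I" and M: "prime_ideal_of R M" and a: "a \<in> I" "a \<notin> M"
  shows "ext_ideal R M I = localization R M"
  unfolding ext_ideal_def
proof
  let ?L = "localization R M"
  show "set_prod I ?L \<subseteq> ?L"
    using ideal_subset[OF I] subring_subset_localization[OF M] subring_zero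
      localization_mult[OF M] localization_add[OF M]
    by (intro set_prod_subset) blast+
  show "?L \<subseteq> set_prod I ?L"
  proof
    fix z assume "z \<in> ?L"
    then obtain r s where rs: "z = r / s" "r \<in> R" "s \<in> R" "s \<notin> M"
      by (rule localizationE)
    have aR: "a \<in> R"
      using ideal_subset[OF I a(1)] .
    have "a \<noteq> 0"
      using a(2) ideal_zero[OF prime_ideal_ideal[OF M]] by auto
    then have "z = a * (r / (s * a))"
      using rs(1) by simp
    also have "\<dots> \<in> set_prod I ?L"
      using rs aR a(2) prime_ideal_mult_notin[OF M]
      by (intro set_prod_mem[OF a(1)] localizationI subring_mult) auto
    finally show "z \<in> set_prod I ?L" .
  qed
qed

lemma locally_principal_contracted_principal:
  assumes unique: "\<forall>P. prime_ideal_of R P \<and> P \<noteq> {0} \<longrightarrow> (\<exists>!M. maximal_ideal_of R M \<and> P \<subseteq> M)"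
    and N: "maximal_ideal_of R N" and x: "x \<in> R" "x \<noteq> 0"
  shows "locally_principal R (contracted_principal R N x)"
  unfolding locally_principal_def
proof (intro allI impI)
  fix M assume M: "maximal_ideal_of R M"
  show "\<exists>c. ext_ideal R M (contracted_principal R N x) = (\<lambda>y. c * y) ` localization R M"
  proof (cases "M = N")
    case True
    then show ?thesis
      using ext_ideal_contracted_principal_self[OF maximal_ideal_imp_prime[OF N] x(1)] by blast
  next
    case False
    then obtain a where "a \<in> contracted_principal R N x" "a \<notin> M"
      using contracted_principal_not_subset[OF unique N M _ x] by blast
    then have "ext_ideal R M (contracted_principal R N x) = (\<lambda>y. 1 * y) ` localization R M"
      using ext_ideal_eq_localization[OF ideal_contracted_principal maximal_ideal_imp_prime[OF M]]
        maximal_ideal_imp_prime[OF N] by simp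
    then show ?thesis ..
  qed
qed

text \<open>
  If x y \<in> N for all y \<in> (R : A), then every element of A (R : A) becomes an element of
  N after multiplication by some element outside N; for 1 this is impossible.
\<close>
lemma colon_contracted_principal_witness:
  assumes N: "prime_ideal_of R N"
    and inv: "invertible_in R (contracted_principal R N x)"
  shows "\<exists>y\<in>colon R (contracted_principal R N x). x * y \<notin> N"
proof (rule ccontr)
  assume "\<not> ?thesis"
  then have xy: "x * y \<in> N" if "y \<in> colon R (contracted_principal R N x)" for y
    using that by blast
  have Ni: "ideal_of R N"
    using N by (rule prime_ideal_ideal)
  let ?B = "{z. \<exists>s\<in>R. s \<notin> N \<and> z * s \<in> N}"
  have "set_prod (contracted_principal R N x) (colon R (contracted_principal R N x)) \<subseteq> ?B"
  proof (rule set_prod_subset)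
    fix a y assume a: "a \<in> contracted_principal R N x" and y: "y \<in> colon R (contracted_principal R N x)"
    obtain s t where st: "s \<in> R" "s \<notin> N" "t \<in> R" "a * s = x * t"
      using a by (rule contracted_principalE)
    have "(a * y) * s = t * (x * y)"
      using st(4) by (metis mult.assoc mult.commute)
    also have "\<dots> \<in> N"
      using ideal_mult_left[OF Ni st(3) xy[OF y]] .
    finally show "a * y \<in> ?B"
      using st(1,2) by blast
  next
    show "0 \<in> ?B"
      using subring_one one_notin_prime_ideal[OF N] ideal_zero[OF Ni] by auto
  next
    fix u v assume "u \<in> ?B" "v \<in> ?B"
    then obtain s1 s2 where s: "s1 \<in> R" "s1 \<notin> N" "u * s1 \<in> N" "s2 \<in> R" "s2 \<notin> N" "v * s2 \<in> N"
      by blast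
    have "(u + v) * (s1 * s2) = (u * s1) * s2 + (v * s2) * s1"
      by (simp add: algebra_simps)
    also have "\<dots> \<in> N"
      using ideal_mult_right[OF Ni s(4) s(3)] ideal_mult_right[OF Ni s(1) s(6)]
      by (rule ideal_add[OF Ni])
    finally show "u + v \<in> ?B"
      using s prime_ideal_mult_notin[OF N] subring_mult by blast
  qed
  then have "1 \<in> ?B"
    using inv subring_one unfolding invertible_in_def by blast
  then show False
    by simp
qed

lemma mult_colon_mem_prime_ideal:
  assumes P: "prime_ideal_of R P" and A: "A \<subseteq> R" "x \<in> A" "a \<in> A"
    and "x \<in> P" "a \<notin> P" and y: "y \<in> colon R A"
  shows "x * y \<in> P"
proof -
  have "y * a \<in> R" "y * x \<in> R"
    using y A unfolding colon_def by auto
  then have "a * (x * y) \<in> P" "x * y \<in> R"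
    using ideal_mult_right[OF prime_ideal_ideal[OF P] \<open>y * a \<in> R\<close> \<open>x \<in> P\<close>]
    by (simp_all add: ac_simps)
  then show ?thesis
    using P A \<open>a \<notin> P\<close> unfolding prime_ideal_of_def by blast
qed

lemma separating_element_exists:
  assumes LPI: "LPI_domain R"
    and unique: "\<forall>P. prime_ideal_of R P \<and> P \<noteq> {0} \<longrightarrow> (\<exists>!M. maximal_ideal_of R M \<and> P \<subseteq> M)"
    and M: "maximal_ideal_of R M" and x: "x \<in> R" "x \<noteq> 0"
  shows "\<exists>r\<in>R. r \<notin> M \<and> (\<forall>M'. maximal_ideal_of R M' \<and> x \<in> M' \<and> M' \<noteq> M \<longrightarrow> r \<in> M')"
proof -
  let ?A = "contracted_principal R M x"
  have Mp: "prime_ideal_of R M"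
    using M by (rule maximal_ideal_imp_prime)
  have A: "ideal_of R ?A" "x \<in> ?A"
    using ideal_contracted_principal[OF Mp] self_mem_contracted_principal[OF Mp x(1)] .
  then have "nonzero_ideal R ?A"
    unfolding nonzero_ideal_def using x(2) by blast
  then have "invertible_in R ?A"
    using LPI locally_principal_contracted_principal[OF unique M x]
    unfolding LPI_domain_def by blast
  then obtain y where y: "y \<in> colon R ?A" "x * y \<notin> M"
    using colon_contracted_principal_witness[OF Mp] by blast
  have "x * y \<in> R"
    using y(1) A(2) unfolding colon_def by (simp add: mult.commute)
  moreover have "x * y \<in> M'" if M': "maximal_ideal_of R M'" "x \<in> M'" "M' \<noteq> M" for M'
  proof -
    obtain a where a: "a \<in> ?A" "a \<notin> M'"
      using contracted_principal_not_subset[OF unique M M'(1) M'(3) x] by blast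
    have "?A \<subseteq> R"
      using ideal_subset[OF A(1)] by blast
    then show ?thesis
      by (rule mult_colon_mem_prime_ideal[OF maximal_ideal_imp_prime[OF M'(1)] _ A(2) a(1) M'(2) a(2) y(1)])
  qed
  ultimately show ?thesis
    using y(2) by blast
qed

subsection \<open>Finite character from separating elements\<close>

lemma ideal_cofinite_members:
  assumes "\<forall>I\<in>\<M>. ideal_of R I"
  shows "ideal_of R {r \<in> R. finite {I \<in> \<M>. r \<notin> I}}"
  unfolding ideal_of_def
proof (intro conjI ballI)
  show "{r \<in> R. finite {I \<in> \<M>. r \<notin> I}} \<subseteq> R"
    by blast
  have "{I \<in> \<M>. 0 \<notin> I} = {}"
    using assms ideal_zero by blast
  then have "finite {I \<in> \<M>. 0 \<notin> I}"
    by (metis finite.emptyI)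
  then show "0 \<in> {r \<in> R. finite {I \<in> \<M>. r \<notin> I}}"
    using subring_zero by blast
next
  fix a b assume "a \<in> {r \<in> R. finite {I \<in> \<M>. r \<notin> I}}" "b \<in> {r \<in> R. finite {I \<in> \<M>. r \<notin> I}}"
  moreover have "{I \<in> \<M>. a + b \<notin> I} \<subseteq> {I \<in> \<M>. a \<notin> I} \<union> {I \<in> \<M>. b \<notin> I}"
    using assms ideal_add by blast
  ultimately show "a + b \<in> {r \<in> R. finite {I \<in> \<M>. r \<notin> I}}"
    by (auto intro: subring_add finite_subset)
next
  fix c a assume "c \<in> R" "a \<in> {r \<in> R. finite {I \<in> \<M>. r \<notin> I}}"
  moreover have "{I \<in> \<M>. c * a \<notin> I} \<subseteq> {I \<in> \<M>. a \<notin> I}"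
    using assms ideal_mult_left \<open>c \<in> R\<close> by blast
  ultimately show "c * a \<in> {r \<in> R. finite {I \<in> \<M>. r \<notin> I}}"
    by (auto intro: subring_mult finite_subset)
qed

lemma finite_character_if_separating:
  assumes sep: "\<And>x M. x \<in> R \<Longrightarrow> x \<noteq> 0 \<Longrightarrow> maximal_ideal_of R M \<Longrightarrow> x \<in> M \<Longrightarrow>
      \<exists>r\<in>R. r \<notin> M \<and> (\<forall>M'. maximal_ideal_of R M' \<and> x \<in> M' \<and> M' \<noteq> M \<longrightarrow> r \<in> M')"
  shows "finite_character R"
  unfolding finite_character_def
proof (intro ballI impI)
  fix x assume x: "x \<in> R" "x \<noteq> 0"
  define \<M> where "\<M> = {M. maximal_ideal_of R M \<and> x \<in> M}"
  define J where "J = {r \<in> R. finite {M \<in> \<M>. r \<notin> M}}"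
  show "finite \<M>"
  proof (rule ccontr)
    assume "infinite \<M>"
    moreover have "{M \<in> \<M>. 1 \<notin> M} = \<M>"
      unfolding \<M>_def using one_notin_maximal_ideal by blast
    ultimately have "1 \<notin> J"
      unfolding J_def by simp
    moreover have "ideal_of R J"
      unfolding J_def \<M>_def using maximal_ideal_ideal by (intro ideal_cofinite_members) blast
    ultimately obtain M where M: "maximal_ideal_of R M" "J \<subseteq> M"
      using maximal_ideal_containing_exists by blast
    have "x \<in> J"
      unfolding J_def \<M>_def using x(1) by simp
    then have "M \<in> \<M>"
      unfolding \<M>_def using M by blast
    obtain r where r: "r \<in> R" "r \<notin> M" and "\<forall>M'\<in>\<M>. M' \<noteq> M \<longrightarrow> r \<in> M'"
      using sep[OF x M(1)] \<open>M \<in> \<M>\<close> unfolding \<M>_def by blast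
    then have "{M' \<in> \<M>. r \<notin> M'} \<subseteq> {M}"
      by blast
    then have "r \<in> J"
      unfolding J_def using r(1) finite_subset by auto
    with M(2) r(2) show False
      by blast
  qed
qed

end

theorem theorem12:
  fixes R :: "'k::field set"
  assumes "subring R"
    and "quotient_field_is_UNIV R"
    and "R \<noteq> UNIV"
    and "finitely_stable R"
    and "LPI_domain R"
    and "\<forall>P. prime_ideal_of R P \<and> P \<noteq> {0} \<longrightarrow>
           (\<exists>!M. maximal_ideal_of R M \<and> P \<subseteq> M)"
  shows "finite_character R"
proof -
  interpret subdomain R
    by (rule subdomain.intro[OF assms(1)])
  show ?thesis
    using separating_element_exists[OF assms(5,6)] by (rule finite_character_if_separating)
qed

end
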